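(* Under the setting below, assume in addition $0<\underline h\le h_{\rm in}\le\overline h<\infty$ and $0\le A_{\rm in}\le 1$, and set $K:=|\overline f|+|\underline f|$. Then $h_m\ge0$ on $\Omega\times[0,T]$. Moreover, for every $t\in[0,T]$ with $$t\le \frac{\underline h}{6K}\qquad\text{and}\qquad \exp\Big(\int_0^t\|\operatorname{div}\vec u^o(s)\|_{L^\infty(\Omega)}\,ds\Big)\le 2,$$ one has $\tfrac14\underline h\le h_m(\cdot,t)\le 4\overline h$ on $\Omega$; and for every $t\in[0,T]$ with $t\le \int_\Omega h_{\rm in}\,dx\big/\big(6K|\Omega|\big)$ one has $$\tfrac12\int_\Omega h_{\rm in}\,dx\le\int_\Omega h_m(x,t)\,dx\le 2\int_\Omega h_{\rm in}\,dx.$$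
   Context: Setting: $\Omega=\mathbb T^2$, $\omega,\nu\in(0,1)$, $T>0$, $\vec u^o:\Omega\times[0,T]\to\mathbb R^2$ a given smooth velocity field, and $(h_m,A_m)$ a sufficiently regular (e.g. classical) solution on $[0,T]$ of $$\partial_t h_m+\operatorname{div}(h_m\vec u^o)=\mathcal S_{h_m,\omega,\nu},\qquad \partial_tA_m+\operatorname{div}(A_m\vec u^o)=\mathcal S_{A_m,\omega,\nu}+A_m\operatorname{div}\vec u^o\cdot\chi^\omega_{A_m},$$ with $h_m(0)=h_{\rm in}$, $A_m(0)=A_{\rm in}$. Here $\psi^+=\max\{\psi,0\}$, $f:\mathbb R\to\mathbb R$ is smooth with $\underline f\le f\le\overline f$, $h_0>0$, and for functions $h,A$: $\chi^\nu_h=h^+/(h^++\nu)$, $\mathcal S_{h,\omega,\nu}=[f(h^+/(A^++\omega))A+(1-A)f(0)]\chi^\nu_h$, $\mathcal S_{A,\omega,\nu}=\frac{(f(0))^+}{h_0+\nu}(1-A)-\frac{A}{2h^++\nu}\cdot\frac{\sqrt{|\mathcal S_{h,\omega,\nu}|^2+\omega^2}-\mathcal S_{h,\omega,\nu}}{2}$, $\chi^\omega_A=1-\frac{(1-A)^+}{(1-A)^++\omega}$, evaluated at $(h_m,A_m)$. *)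

theory Defs
  imports "HOL-Analysis.Analysis"
begin

text \<open>Points of space-time: ((x1,x2),t).  The torus T^2 = R^2/Z^2 is represented by
  functions on R^2 that are 1-periodic in each coordinate; Omega is identified with the
  fundamental cell [0,1]^2.\<close>

type_synonym pt3 = "(real \<times> real) \<times> real"

definition pos :: "real \<Rightarrow> real" where
  "pos \<psi> = max \<psi> 0"

definition pdiff :: "nat \<Rightarrow> (pt3 \<Rightarrow> real) \<Rightarrow> pt3 \<Rightarrow> real" where
  "pdiff i g z =
     (if i = 0 then deriv (\<lambda>s. g ((s, snd (fst z)), snd z)) (fst (fst z))
      else if i = 1 then deriv (\<lambda>s. g ((fst (fst z), s), snd z)) (snd (fst z))
      else deriv (\<lambda>s. g (fst z, s)) (snd z))"

abbreviation dx1 where "dx1 \<equiv> pdiff 0"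
abbreviation dx2 where "dx2 \<equiv> pdiff 1"
abbreviation dt where "dt \<equiv> pdiff 2"

definition smooth3 :: "(pt3 \<Rightarrow> real) \<Rightarrow> bool" where
  "smooth3 g \<longleftrightarrow> (\<forall>is z. fold pdiff is g differentiable (at z))"

definition C1_3 :: "(pt3 \<Rightarrow> real) \<Rightarrow> bool" where
  "C1_3 g \<longleftrightarrow> (\<forall>z. g differentiable (at z)) \<and> (\<forall>i<3. continuous_on UNIV (pdiff i g))"

definition smooth_real :: "(real \<Rightarrow> real) \<Rightarrow> bool" where
  "smooth_real f \<longleftrightarrow> (\<forall>n x. (deriv ^^ n) f differentiable (at x))"

definition periodic_x :: "(pt3 \<Rightarrow> 'a) \<Rightarrow> bool" where
  "periodic_x g \<longleftrightarrow> (\<forall>a b t. g ((a + 1, b), t) = g ((a, b), t) \<and> g ((a, b + 1), t) = g ((a, b), t))"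

definition divu :: "(pt3 \<Rightarrow> real \<times> real) \<Rightarrow> pt3 \<Rightarrow> real" where
  "divu u z = dx1 (\<lambda>w. fst (u w)) z + dx2 (\<lambda>w. snd (u w)) z"

definition divflux :: "(pt3 \<Rightarrow> real) \<Rightarrow> (pt3 \<Rightarrow> real \<times> real) \<Rightarrow> pt3 \<Rightarrow> real" where
  "divflux g u z = dx1 (\<lambda>w. g w * fst (u w)) z + dx2 (\<lambda>w. g w * snd (u w)) z"

definition chi_h :: "real \<Rightarrow> real \<Rightarrow> real" where
  "chi_h \<nu> h = pos h / (pos h + \<nu>)"

definition S_h :: "(real \<Rightarrow> real) \<Rightarrow> real \<Rightarrow> real \<Rightarrow> real \<Rightarrow> real \<Rightarrow> real" where
  "S_h f \<omega> \<nu> h A = (f (pos h / (pos A + \<omega>)) * A + (1 - A) * f 0) * chi_h \<nu> h"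

definition S_A :: "(real \<Rightarrow> real) \<Rightarrow> real \<Rightarrow> real \<Rightarrow> real \<Rightarrow> real \<Rightarrow> real \<Rightarrow> real" where
  "S_A f \<omega> \<nu> h0 h A =
     pos (f 0) / (h0 + \<nu>) * (1 - A)
     - A / (2 * pos h + \<nu>) * ((sqrt ((S_h f \<omega> \<nu> h A)\<^sup>2 + \<omega>\<^sup>2) - S_h f \<omega> \<nu> h A) / 2)"

definition chi_A :: "real \<Rightarrow> real \<Rightarrow> real" where
  "chi_A \<omega> A = 1 - pos (1 - A) / (pos (1 - A) + \<omega>)"

definition Omega :: "(real \<times> real) set" where
  "Omega = cbox (0, 0) (1, 1)"

definition Linf_divu :: "(pt3 \<Rightarrow> real \<times> real) \<Rightarrow> real \<Rightarrow> real" where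
  "Linf_divu u s = (SUP x\<in>Omega. \<bar>divu u (x, s)\<bar>)"

end

theory Submission
  imports Defs
begin

(* A comparison argument on the periodic cell. Suppose a solution w first touches a barrier
   \<phi>(t) from above at (x, t). Then x minimises w(\<cdot>, t), so the spatial derivatives of w vanish
   and the transport equation reduces to dt w = source - w div u there, while first contact
   forces dt w \<le> \<phi>'(t). A barrier whose derivative lies strictly below the reduced right-hand
   side is therefore never touched. With E(t) the time integral of the sup norm of div u and K a
   bound for the h-source (valid once 0 \<le> A \<le> 1), the barriers are -\<epsilon> exp (E(t) + t) for
   h, A \<ge> 0, the constant 1 + \<epsilon> from above for A \<le> 1, and h_lo exp (-E(t)) - K t - \<epsilon> (1 + t) from
   below and exp (E(t)) (h_hi + K t + \<epsilon> (1 + t)) from above for h; letting \<epsilon> \<rightarrow> 0 and using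
   exp (E(t)) \<le> 2 gives the pointwise bounds. For the mass, the divergence of a periodic flux
   integrates to zero over the cell, so the total mass changes at rate at most K. *)

lemma has_real_derivative_dx1:
  assumes "g differentiable (at ((a, b), t))"
  shows "((\<lambda>s. g ((s, b), t)) has_real_derivative dx1 g ((a, b), t)) (at a)"
proof -
  have "(\<lambda>s. g ((s, b), t)) differentiable (at a)"
    by (rule differentiable_compose[of g]) (use assms in auto)
  then show ?thesis by (simp add: pdiff_def DERIV_deriv_iff_real_differentiable)
qed

lemma has_real_derivative_dx2:
  assumes "g differentiable (at ((a, b), t))"
  shows "((\<lambda>s. g ((a, s), t)) has_real_derivative dx2 g ((a, b), t)) (at b)"
proof -
  have "(\<lambda>s. g ((a, s), t)) differentiable (at b)"
    by (rule differentiable_compose[of g]) (use assms in auto)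
  then show ?thesis by (simp add: pdiff_def DERIV_deriv_iff_real_differentiable)
qed

lemma has_real_derivative_dt:
  assumes "g differentiable (at (x, t))"
  shows "((\<lambda>s. g (x, s)) has_real_derivative dt g (x, t)) (at t)"
proof -
  have "(\<lambda>s. g (x, s)) differentiable (at t)"
    by (rule differentiable_compose[of g]) (use assms in auto)
  then show ?thesis by (simp add: pdiff_def DERIV_deriv_iff_real_differentiable)
qed

lemma pdiff_uminus:
  assumes "g differentiable (at z)"
  shows "pdiff i (\<lambda>w. - g w) z = - pdiff i g z"
proof -
  obtain a b t where z: "z = ((a, b), t)" by (metis prod.collapse)
  note g = assms[unfolded z]
  have "deriv (\<lambda>s. - g ((s, b), t)) a = - dx1 g z"
    using DERIV_minus[OF has_real_derivative_dx1[OF g]] z by (simp add: DERIV_imp_deriv)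
  moreover have "deriv (\<lambda>s. - g ((a, s), t)) b = - dx2 g z"
    using DERIV_minus[OF has_real_derivative_dx2[OF g]] z by (simp add: DERIV_imp_deriv)
  moreover have "deriv (\<lambda>s. - g ((a, b), s)) t = - dt g z"
    using DERIV_minus[OF has_real_derivative_dt[OF g]] z by (simp add: DERIV_imp_deriv)
  ultimately show ?thesis by (simp add: pdiff_def z)
qed

lemma pdiff_mult:
  assumes "g1 differentiable (at z)" "g2 differentiable (at z)" "i < 2"
  shows "pdiff i (\<lambda>w. g1 w * g2 w) z = pdiff i g1 z * g2 z + g1 z * pdiff i g2 z"
proof -
  obtain a b t where z: "z = ((a, b), t)" by (metis prod.collapse)
  note g = assms(1,2)[unfolded z]
  have "deriv (\<lambda>s. g1 ((s, b), t) * g2 ((s, b), t)) a = dx1 g1 z * g2 z + g1 z * dx1 g2 z"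
    using DERIV_mult[OF has_real_derivative_dx1[OF g(1)] has_real_derivative_dx1[OF g(2)]] z
    by (simp add: DERIV_imp_deriv algebra_simps)
  moreover have "deriv (\<lambda>s. g1 ((a, s), t) * g2 ((a, s), t)) b = dx2 g1 z * g2 z + g1 z * dx2 g2 z"
    using DERIV_mult[OF has_real_derivative_dx2[OF g(1)] has_real_derivative_dx2[OF g(2)]] z
    by (simp add: DERIV_imp_deriv algebra_simps)
  ultimately show ?thesis using assms(3) by (auto simp: pdiff_def z less_2_cases_iff)
qed

lemma divflux_eq:
  assumes "g differentiable (at z)" "(\<lambda>w. fst (u w)) differentiable (at z)"
    "(\<lambda>w. snd (u w)) differentiable (at z)"
  shows "divflux g u z = dx1 g z * fst (u z) + dx2 g z * snd (u z) + g z * divu u z"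
  using pdiff_mult[OF assms(1,2), of 0] pdiff_mult[OF assms(1,3), of 1]
  by (simp add: divflux_def divu_def algebra_simps)

lemma pdiff_eq_0_at_slice_min:
  assumes "g differentiable (at ((a, b), t))" "\<And>y. g ((a, b), t) \<le> g (y, t)"
  shows "dx1 g ((a, b), t) = 0" "dx2 g ((a, b), t) = 0"
  using DERIV_local_min[OF has_real_derivative_dx1[OF assms(1)] zero_less_one]
    DERIV_local_min[OF has_real_derivative_dx2[OF assms(1)] zero_less_one] assms(2) by auto

lemma compact_Omega: "compact Omega"
  by (simp add: Omega_def)

lemma Omega_nonempty: "Omega \<noteq> {}"
proof -
  have "(0, 0) \<in> Omega" by (auto simp: Omega_def cbox_Pair_iff cbox_interval)
  then show ?thesis by blast
qed

lemma content_Omega: "Henstock_Kurzweil_Integration.content Omega = 1"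
  by (simp add: Omega_def content_cbox_cases Basis_prod_def inner_prod_def)

lemma measure_Omega: "measure lborel Omega = 1"
  by (simp add: Omega_def measure_lborel_cbox_eq Basis_prod_def inner_prod_def)

lemma periodic_x_int_shift:
  assumes "periodic_x g"
  shows "g ((a + of_int k, b), t) = g ((a, b), t)" "g ((a, b + of_int k), t) = g ((a, b), t)"
proof -
  have step: "g ((c + 1, d), t) = g ((c, d), t)" "g ((c, d + 1), t) = g ((c, d), t)" for c d
    using assms by (simp_all add: periodic_x_def)
  have nat_shift: "g ((c + real n, d), t) = g ((c, d), t) \<and> g ((c, d + real n), t) = g ((c, d), t)"
    for n :: nat and c d
  proof (induction n)
    case (Suc n)
    have "g ((c + real (Suc n), d), t) = g ((c + real n + 1, d), t)"
      "g ((c, d + real (Suc n)), t) = g ((c, d + real n + 1), t)" by (simp_all add: algebra_simps)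
    then show ?case using Suc step by simp
  qed simp
  have "g ((a + of_int k, b), t) = g ((a, b), t) \<and> g ((a, b + of_int k), t) = g ((a, b), t)"
  proof (cases "0 \<le> k")
    case True
    then show ?thesis using nat_shift[where n = "nat k" and c = a and d = b] by simp
  next
    case False
    then show ?thesis
      using nat_shift[where n = "nat (- k)" and c = "a + of_int k" and d = b]
        nat_shift[where n = "nat (- k)" and c = a and d = "b + of_int k"] by simp
  qed
  then show "g ((a + of_int k, b), t) = g ((a, b), t)" "g ((a, b + of_int k), t) = g ((a, b), t)"
    by simp_all
qed

lemma periodic_x_representative:
  assumes "periodic_x g"
  obtains y where "y \<in> Omega" "g (x, t) = g (y, t)"
proof -
  obtain a b where x: "x = (a, b)" by (cases x)
  let ?y = "(a - of_int \<lfloor>a\<rfloor>, b - of_int \<lfloor>b\<rfloor>)"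
  have "g (x, t) = g (?y, t)"
    using periodic_x_int_shift[OF assms, where a = "a - of_int \<lfloor>a\<rfloor>" and k = "\<lfloor>a\<rfloor>"]
      periodic_x_int_shift[OF assms, where b = "b - of_int \<lfloor>b\<rfloor>" and k = "\<lfloor>b\<rfloor>"] x
    by simp
  moreover have "?y \<in> Omega"
    unfolding Omega_def using floor_correct[of a] floor_correct[of b]
    by (auto simp: cbox_Pair_iff cbox_interval) linarith+
  ultimately show ?thesis using that by blast
qed

lemma continuous_on_ge_at_right_end:
  fixes g :: "real \<Rightarrow> real"
  assumes "continuous_on {a..b} g" "a < b" "\<And>s. s \<in> {a..<b} \<Longrightarrow> c \<le> g s"
  shows "c \<le> g b"
proof -
  have "(g \<longlongrightarrow> g b) (at_left b)"
    using assms(1,2) by (simp add: continuous_on_def at_within_Icc_at_left[symmetric])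
  moreover have "eventually (\<lambda>s. c \<le> g s) (at_left b)"
    using eventually_at_left_real[OF assms(2)] by eventually_elim (simp add: assms(3))
  ultimately show ?thesis by (rule tendsto_lowerbound) simp
qed

lemma first_touching_time:
  fixes w :: "pt3 \<Rightarrow> real" and \<phi> :: "real \<Rightarrow> real"
  assumes w: "continuous_on UNIV w" "periodic_x w" and \<phi>: "continuous_on {0..t0} \<phi>"
    and init: "\<And>x. \<phi> 0 < w (x, 0)" and touch: "t \<in> {0..t0}" "w (x, t) \<le> \<phi> t"
  obtains y t1 where "y \<in> Omega" "0 < t1" "t1 \<le> t0" "w (y, t1) = \<phi> t1"
    "\<And>z. \<phi> t1 \<le> w (z, t1)" "\<And>s. s \<in> {0..<t1} \<Longrightarrow> \<phi> s < w (y, s)"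
proof -
  \<comment> \<open>by periodicity it suffices to search the compact set \<open>Omega \<times> [0, t0]\<close> for contact points\<close>
  define B where "B = Omega \<times> {0..t0}"
  define C where "C = B \<inter> (\<lambda>z. w z - \<phi> (snd z)) -` {..0}"
  have "compact B" unfolding B_def Omega_def by (intro compact_Times compact_cbox compact_Icc)
  moreover have "continuous_on B (\<lambda>z. w z - \<phi> (snd z))"
    unfolding B_def
    by (intro continuous_intros continuous_on_subset[OF w(1)] continuous_on_compose2[OF \<phi>]) auto
  ultimately have "closed C"
    unfolding C_def by (intro continuous_closed_preimage) (auto intro: compact_imp_closed)
  then have "compact (C \<inter> B)" using \<open>compact B\<close> by (rule closed_Int_compact)
  moreover have "C \<inter> B = C" by (auto simp: C_def)
  ultimately have "compact C" by simp
  then have "compact (snd ` C)" by (intro compact_continuous_image continuous_intros)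
  obtain x' where "x' \<in> Omega" "w (x, t) = w (x', t)" using periodic_x_representative[OF w(2)] .
  then have "(x', t) \<in> C" using touch by (auto simp: C_def B_def)
  then obtain t1 where t1: "t1 \<in> snd ` C" "\<And>s. s \<in> snd ` C \<Longrightarrow> t1 \<le> s"
    using compact_attains_inf[OF \<open>compact (snd ` C)\<close>] by blast
  then obtain y where "(y, t1) \<in> C" by auto
  then have y: "y \<in> Omega" "t1 \<in> {0..t0}" "w (y, t1) \<le> \<phi> t1" by (auto simp: C_def B_def)
  have "t1 \<noteq> 0" using y(3) init[of y] by auto
  with y have "0 < t1" by simp
  have before: "\<phi> s < w (z, s)" if "s \<in> {0..<t1}" for s z
  proof (rule ccontr)
    assume "\<not> \<phi> s < w (z, s)"
    moreover obtain z' where "z' \<in> Omega" "w (z, s) = w (z', s)"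
      using periodic_x_representative[OF w(2)] .
    ultimately have "(z', s) \<in> C" using that y(2) by (auto simp: C_def B_def)
    then have "s \<in> snd ` C" by (rule rev_image_eqI) simp
    then show False using t1(2)[of s] that by simp
  qed
  have at_t1: "\<phi> t1 \<le> w (z, t1)" for z
  proof -
    have "continuous_on {0..t1} (\<lambda>s. w (z, s) - \<phi> s)"
      using y(2) by (intro continuous_intros continuous_on_compose2[OF w(1)] continuous_on_subset[OF \<phi>]) auto
    then have "0 \<le> w (z, t1) - \<phi> t1"
      using \<open>0 < t1\<close> by (rule continuous_on_ge_at_right_end) (simp add: less_imp_le before)
    then show ?thesis by simp
  qed
  show ?thesis
  proof (rule that)
    show "t1 \<le> t0" using y(2) by simp
    show "w (y, t1) = \<phi> t1" using y(3) at_t1[of y] by simp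
    show "\<phi> s < w (y, s)" if "s \<in> {0..<t1}" for s using before[OF that] .
  qed (fact y(1) \<open>0 < t1\<close> at_t1)+
qed

lemma DERIV_le_at_first_contact:
  fixes g \<phi> :: "real \<Rightarrow> real"
  assumes "(g has_real_derivative dg) (at t)" "(\<phi> has_real_derivative d\<phi>) (at t)"
    "0 < t" "g t = \<phi> t" "\<And>s. s \<in> {0..<t} \<Longrightarrow> \<phi> s < g s"
  shows "dg \<le> d\<phi>"
proof (rule ccontr)
  assume "\<not> dg \<le> d\<phi>"
  then have "0 < dg - d\<phi>" by simp
  moreover have "((\<lambda>s. g s - \<phi> s) has_real_derivative dg - d\<phi>) (at t)"
    using assms by (intro derivative_intros)
  ultimately obtain d where d: "0 < d" "\<And>h. 0 < h \<Longrightarrow> h < d \<Longrightarrow> g (t - h) - \<phi> (t - h) < g t - \<phi> t"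
    using DERIV_pos_inc_left by blast
  define h where "h = min (d / 2) t"
  have "0 < h" "h < d" "t - h \<in> {0..<t}" using d(1) assms(3) by (auto simp: h_def)
  then show False using d(2)[of h] assms(4) assms(5)[of "t - h"] by simp
qed

lemma periodic_lower_barrier:
  fixes w :: "pt3 \<Rightarrow> real" and \<phi> \<phi>' :: "real \<Rightarrow> real"
  assumes w: "\<And>z. w differentiable (at z)" "periodic_x w"
    and \<phi>: "continuous_on {0..t0} \<phi>" "\<And>s. s \<in> {0<..t0} \<Longrightarrow> (\<phi> has_real_derivative \<phi>' s) (at s)"
    and init: "\<And>x. \<phi> 0 < w (x, 0)"
    and contact: "\<And>x s. x \<in> Omega \<Longrightarrow> s \<in> {0<..t0} \<Longrightarrow> w (x, s) = \<phi> s \<Longrightarrow>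
      dx1 w (x, s) = 0 \<Longrightarrow> dx2 w (x, s) = 0 \<Longrightarrow> \<phi>' s < dt w (x, s)"
    and t: "t \<in> {0..t0}"
  shows "\<phi> t < w (x, t)"
proof (rule ccontr)
  assume "\<not> \<phi> t < w (x, t)"
  moreover have "continuous_on UNIV w"
    using w(1) by (meson continuous_at_imp_continuous_on differentiable_imp_continuous_within)
  ultimately obtain y t1 where y: "y \<in> Omega" "0 < t1" "t1 \<le> t0" "w (y, t1) = \<phi> t1"
    "\<And>z. \<phi> t1 \<le> w (z, t1)" "\<And>s. s \<in> {0..<t1} \<Longrightarrow> \<phi> s < w (y, s)"
    using first_touching_time[OF _ w(2) \<phi>(1) init t] by (metis not_less)
  obtain a b where ab: "y = (a, b)" by (cases y)
  have "dx1 w (y, t1) = 0" "dx2 w (y, t1) = 0"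
    using pdiff_eq_0_at_slice_min[OF w(1)] y(4,5) ab by auto
  then have "\<phi>' t1 < dt w (y, t1)" using contact y(1-4) by simp
  moreover have "dt w (y, t1) \<le> \<phi>' t1"
    using DERIV_le_at_first_contact[OF has_real_derivative_dt[OF w(1)] \<phi>(2)] y(2-4,6) by simp
  ultimately show False by simp
qed

lemma periodic_upper_barrier:
  fixes w :: "pt3 \<Rightarrow> real" and \<psi> \<psi>' :: "real \<Rightarrow> real"
  assumes w: "\<And>z. w differentiable (at z)" "periodic_x w"
    and \<psi>: "continuous_on {0..t0} \<psi>" "\<And>s. s \<in> {0<..t0} \<Longrightarrow> (\<psi> has_real_derivative \<psi>' s) (at s)"
    and init: "\<And>x. w (x, 0) < \<psi> 0"
    and contact: "\<And>x s. x \<in> Omega \<Longrightarrow> s \<in> {0<..t0} \<Longrightarrow> w (x, s) = \<psi> s \<Longrightarrow>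
      dx1 w (x, s) = 0 \<Longrightarrow> dx2 w (x, s) = 0 \<Longrightarrow> dt w (x, s) < \<psi>' s"
    and t: "t \<in> {0..t0}"
  shows "w (x, t) < \<psi> t"
proof -
  have "- \<psi> t < - w (x, t)"
  proof (rule periodic_lower_barrier[where w = "\<lambda>z. - w z" and \<phi>' = "\<lambda>s. - \<psi>' s"])
    show "periodic_x (\<lambda>z. - w z)" using w(2) by (simp add: periodic_x_def)
    show "continuous_on {0..t0} (\<lambda>s. - \<psi> s)" using \<psi>(1) by (intro continuous_intros)
    show "((\<lambda>s. - \<psi> s) has_real_derivative - \<psi>' s) (at s)" if "s \<in> {0<..t0}" for s
      using \<psi>(2)[OF that] by (rule DERIV_minus)
    show "- \<psi>' s < dt (\<lambda>z. - w z) (x, s)"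
      if "x \<in> Omega" "s \<in> {0<..t0}" "- w (x, s) = - \<psi> s"
        "dx1 (\<lambda>z. - w z) (x, s) = 0" "dx2 (\<lambda>z. - w z) (x, s) = 0" for x s
      using contact[OF that(1,2)] that(3-5) by (simp add: pdiff_uminus[OF w(1)])
  qed (use w(1) init t in auto)
  then show ?thesis by simp
qed

lemma le_of_forall_pos_less_add_mult:
  fixes x y c :: real
  assumes "\<And>\<epsilon>. 0 < \<epsilon> \<Longrightarrow> x < y + \<epsilon> * c"
  shows "x \<le> y"
proof (cases "c \<le> 0")
  case True
  then show ?thesis using assms[of 1] by simp
next
  case False
  show ?thesis
  proof (rule field_le_epsilon)
    fix e :: real assume "0 < e"
    then show "x \<le> y + e" using assms[of "e / c"] False by simp
  qed
qed

lemma continuous_on_SUP_compact: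
  fixes g :: "'a::metric_space \<times> real \<Rightarrow> real"
  assumes S: "compact S" "S \<noteq> {}" and g: "continuous_on (S \<times> {a..b}) g"
  shows "continuous_on {a..b} (\<lambda>s. SUP x\<in>S. g (x, s))"
proof -
  have bdd: "bdd_above ((\<lambda>x. g (x, s)) ` S)" if "s \<in> {a..b}" for s
  proof -
    have "continuous_on S (\<lambda>x. g (x, s))"
      using that by (intro continuous_on_compose2[OF g] continuous_intros) auto
    then show ?thesis
      using S(1) by (intro bounded_imp_bdd_above compact_imp_bounded compact_continuous_image)
  qed
  have close: "(SUP x\<in>S. g (x, s')) \<le> (SUP x\<in>S. g (x, s)) + e"
    if "s \<in> {a..b}" "\<And>x. x \<in> S \<Longrightarrow> g (x, s') < g (x, s) + e" for s s' e
  proof (rule cSUP_least[OF S(2)])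
    fix x assume "x \<in> S"
    then show "g (x, s') \<le> (SUP x\<in>S. g (x, s)) + e"
      using that(2)[of x] cSUP_upper[OF _ bdd[OF that(1)], of x] by simp
  qed
  have uc: "uniformly_continuous_on (S \<times> {a..b}) g"
    using S(1) g by (intro compact_uniformly_continuous compact_Times compact_Icc)
  show ?thesis unfolding continuous_on_iff
  proof (intro ballI allI impI)
    fix s e :: real assume s: "s \<in> {a..b}" and "0 < e"
    then have "0 < e / 2" by simp
    with uc obtain d where d: "0 < d"
      "\<And>z z'. z \<in> S \<times> {a..b} \<Longrightarrow> z' \<in> S \<times> {a..b} \<Longrightarrow> dist z' z < d \<Longrightarrow> dist (g z') (g z) < e / 2"
      unfolding uniformly_continuous_on_def by blast
    show "\<exists>d>0. \<forall>s'\<in>{a..b}. dist s' s < d \<longrightarrow> dist (SUP x\<in>S. g (x, s')) (SUP x\<in>S. g (x, s)) < e"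
    proof (intro exI[of _ d] conjI ballI impI \<open>0 < d\<close>)
      fix s' assume s': "s' \<in> {a..b}" "dist s' s < d"
      have lt: "g (x, s') < g (x, s) + e / 2" "g (x, s) < g (x, s') + e / 2" if "x \<in> S" for x
      proof -
        have "dist (x, s') (x, s) < d" using s'(2) by (simp add: dist_Pair_Pair)
        then have "dist (g (x, s')) (g (x, s)) < e / 2" using d(2) that s s'(1) by simp
        then show "g (x, s') < g (x, s) + e / 2" "g (x, s) < g (x, s') + e / 2"
          unfolding dist_real_def abs_less_iff by linarith+
      qed
      have "(SUP x\<in>S. g (x, s')) \<le> (SUP x\<in>S. g (x, s)) + e / 2"
        by (rule close[OF s]) (rule lt(1))
      moreover have "(SUP x\<in>S. g (x, s)) \<le> (SUP x\<in>S. g (x, s')) + e / 2"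
        by (rule close[OF s'(1)]) (rule lt(2))
      ultimately show "dist (SUP x\<in>S. g (x, s')) (SUP x\<in>S. g (x, s)) < e"
        using \<open>0 < e\<close> by (simp add: dist_real_def abs_le_iff)
    qed
  qed
qed

context
  fixes u :: "pt3 \<Rightarrow> real \<times> real"
  assumes divu_cont: "continuous_on UNIV (divu u)"
begin

lemma abs_divu_le_Linf_divu: "x \<in> Omega \<Longrightarrow> \<bar>divu u (x, s)\<bar> \<le> Linf_divu u s"
  unfolding Linf_divu_def
proof (rule cSUP_upper)
  have "continuous_on Omega (\<lambda>x. \<bar>divu u (x, s)\<bar>)"
    by (intro continuous_intros continuous_on_compose2[OF divu_cont]) auto
  then show "bdd_above ((\<lambda>x. \<bar>divu u (x, s)\<bar>) ` Omega)"
    by (intro bounded_imp_bdd_above compact_imp_bounded compact_continuous_image compact_Omega)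
qed

lemma Linf_divu_nonneg: "0 \<le> Linf_divu u s"
proof -
  obtain x where "x \<in> Omega" using Omega_nonempty by blast
  then show ?thesis using abs_divu_le_Linf_divu[of x s] by linarith
qed

lemma continuous_on_Linf_divu: "continuous_on {a..b} (Linf_divu u)"
  unfolding Linf_divu_def
  using continuous_on_SUP_compact[OF compact_Omega Omega_nonempty, of a b "\<lambda>z. \<bar>divu u z\<bar>"]
    continuous_on_subset[OF continuous_on_rabs[OF divu_cont]] by simp

end

lemma has_real_derivative_integral_from_0:
  fixes L :: "real \<Rightarrow> real"
  assumes "\<And>b. continuous_on {0..b} L" "0 < t"
  shows "((\<lambda>t. integral {0..t} L) has_real_derivative L t) (at t)"
proof -
  have "((\<lambda>t. integral {0..t} L) has_real_derivative L t) (at t within {0..t + 1})"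
    by (rule integral_has_real_derivative[OF assms(1)]) (use assms(2) in simp)
  moreover have "at t within {0..t + 1} = at t"
    by (rule at_within_interior) (use assms(2) in simp)
  ultimately show ?thesis by simp
qed

lemma nonneg_by_exponential_barrier:
  fixes w :: "pt3 \<Rightarrow> real" and L :: "real \<Rightarrow> real"
  assumes w: "\<And>z. w differentiable (at z)" "periodic_x w" and L: "\<And>b. continuous_on {0..b} L"
    and init: "\<And>x. 0 \<le> w (x, 0)"
    and contact: "\<And>x s. x \<in> Omega \<Longrightarrow> s \<in> {0<..T} \<Longrightarrow> w (x, s) < 0 \<Longrightarrow>
      dx1 w (x, s) = 0 \<Longrightarrow> dx2 w (x, s) = 0 \<Longrightarrow> w (x, s) * L s \<le> dt w (x, s)"
    and t: "t \<in> {0..T}"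
  shows "0 \<le> w (x, t)"
proof (rule le_of_forall_pos_less_add_mult)
  fix \<epsilon> :: real assume "0 < \<epsilon>"
  define \<phi> where "\<phi> s = - \<epsilon> * exp (integral {0..s} L + s)" for s
  have "\<phi> t < w (x, t)"
  proof (rule periodic_lower_barrier[OF w, where \<phi>' = "\<lambda>s. \<phi> s * (L s + 1)"])
    show "continuous_on {0..T} \<phi>"
      unfolding \<phi>_def by (intro continuous_intros indefinite_integral_continuous_1 integrable_continuous_real L)
    show "(\<phi> has_real_derivative \<phi> s * (L s + 1)) (at s)" if "s \<in> {0<..T}" for s
      unfolding \<phi>_def using has_real_derivative_integral_from_0[OF L, of s] that
      by (auto intro!: derivative_eq_intros)
    show "\<phi> 0 < w (x, 0)" for x using init[of x] \<open>0 < \<epsilon>\<close> by (simp add: \<phi>_def)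
    show "\<phi> s * (L s + 1) < dt w (x, s)"
      if "x \<in> Omega" "s \<in> {0<..T}" "w (x, s) = \<phi> s" "dx1 w (x, s) = 0" "dx2 w (x, s) = 0" for x s
    proof -
      have "\<phi> s < 0" using \<open>0 < \<epsilon>\<close> by (simp add: \<phi>_def)
      then have "\<phi> s * (L s + 1) < \<phi> s * L s" by (simp add: algebra_simps)
      also have "\<dots> \<le> dt w (x, s)" using contact[OF that(1,2) _ that(4,5)] \<open>\<phi> s < 0\<close> that(3) by simp
      finally show ?thesis .
    qed
  qed (rule t)
  then show "0 < w (x, t) + \<epsilon> * exp (integral {0..t} L + t)" by (simp add: \<phi>_def)
qed

lemma continuous_on_pdiff_mult:
  assumes "\<And>z. g1 differentiable (at z)" "\<And>z. g2 differentiable (at z)"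
    "continuous_on UNIV (pdiff i g1)" "continuous_on UNIV (pdiff i g2)" "i < 2"
  shows "continuous_on UNIV (pdiff i (\<lambda>w. g1 w * g2 w))"
proof -
  have "continuous_on UNIV g1" "continuous_on UNIV g2"
    using assms(1,2) by (meson continuous_at_imp_continuous_on differentiable_imp_continuous_within)+
  then have "continuous_on UNIV (\<lambda>z. pdiff i g1 z * g2 z + g1 z * pdiff i g2 z)"
    using assms(3,4) by (intro continuous_intros)
  then show ?thesis using pdiff_mult[OF assms(1,2,5)] by simp
qed

lemma continuous_on_time_slice:
  fixes g :: "pt3 \<Rightarrow> real"
  shows "continuous_on UNIV g \<Longrightarrow> continuous_on S (\<lambda>x. g (x, t))"
  by (rule continuous_on_compose2[of UNIV g]) (auto intro!: continuous_intros)

lemma integrable_on_Omega_time_slice: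
  fixes g :: "pt3 \<Rightarrow> real"
  assumes "continuous_on UNIV g"
  shows "(\<lambda>x. g (x, t)) integrable_on Omega"
  unfolding Omega_def by (rule integrable_continuous[OF continuous_on_time_slice[OF assms]])

lemma integral_Omega_dx1_periodic:
  assumes g: "\<And>z. g differentiable (at z)" "continuous_on UNIV (dx1 g)" "periodic_x g"
  shows "integral Omega (\<lambda>x. dx1 g (x, t)) = 0"
proof -
  have c: "continuous_on (cbox (0, 0) (1, 1)) (\<lambda>(x, y). dx1 g ((x, y), t))"
    using continuous_on_time_slice[OF g(2)] by (simp add: case_prod_unfold)
  have line: "integral {0..1} (\<lambda>x. dx1 g ((x, y), t)) = 0" for y
  proof -
    have "((\<lambda>x. dx1 g ((x, y), t)) has_integral g ((1, y), t) - g ((0, y), t)) {0..1}"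
    proof (rule fundamental_theorem_of_calculus)
      show "((\<lambda>x. g ((x, y), t)) has_vector_derivative dx1 g ((x, y), t)) (at x within {0..1})" for x
        using has_real_derivative_dx1[OF g(1)]
        by (simp add: has_real_derivative_iff_has_vector_derivative has_vector_derivative_at_within)
    qed simp
    moreover have "g ((1, y), t) = g ((0, y), t)" using g(3) by (metis add_0 periodic_x_def)
    ultimately show ?thesis by (simp add: integral_unique)
  qed
  have "integral Omega (\<lambda>x. dx1 g (x, t))
      = integral (cbox 0 1) (\<lambda>x. integral (cbox 0 1) (\<lambda>y. dx1 g ((x, y), t)))"
    unfolding Omega_def by (subst integral_prod_continuous) (use c in \<open>auto simp: case_prod_unfold\<close>)
  also have "\<dots> = integral (cbox 0 1) (\<lambda>y. integral (cbox 0 1) (\<lambda>x. dx1 g ((x, y), t)))"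
    by (rule integral_swap_continuous[OF c])
  finally show ?thesis using line by (simp add: cbox_interval)
qed

lemma integral_Omega_dx2_periodic:
  assumes g: "\<And>z. g differentiable (at z)" "continuous_on UNIV (dx2 g)" "periodic_x g"
  shows "integral Omega (\<lambda>x. dx2 g (x, t)) = 0"
proof -
  have c: "continuous_on (cbox (0, 0) (1, 1)) (\<lambda>(x, y). dx2 g ((x, y), t))"
    using continuous_on_time_slice[OF g(2)] by (simp add: case_prod_unfold)
  have line: "integral {0..1} (\<lambda>y. dx2 g ((x, y), t)) = 0" for x
  proof -
    have "((\<lambda>y. dx2 g ((x, y), t)) has_integral g ((x, 1), t) - g ((x, 0), t)) {0..1}"
    proof (rule fundamental_theorem_of_calculus)
      show "((\<lambda>y. g ((x, y), t)) has_vector_derivative dx2 g ((x, y), t)) (at y within {0..1})" for y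
        using has_real_derivative_dx2[OF g(1)]
        by (simp add: has_real_derivative_iff_has_vector_derivative has_vector_derivative_at_within)
    qed simp
    moreover have "g ((x, 1), t) = g ((x, 0), t)" using g(3) by (metis add_0 periodic_x_def)
    ultimately show ?thesis by (simp add: integral_unique)
  qed
  have "integral Omega (\<lambda>x. dx2 g (x, t))
      = integral (cbox 0 1) (\<lambda>x. integral (cbox 0 1) (\<lambda>y. dx2 g ((x, y), t)))"
    unfolding Omega_def by (subst integral_prod_continuous) (use c in \<open>auto simp: case_prod_unfold\<close>)
  then show ?thesis using line by (simp add: cbox_interval)
qed

lemma continuous_on_divflux:
  fixes g :: "pt3 \<Rightarrow> real" and u :: "pt3 \<Rightarrow> real \<times> real"
  assumes g: "\<And>z. g differentiable (at z)" "continuous_on UNIV (dx1 g)" "continuous_on UNIV (dx2 g)"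
    and u: "\<And>z. (\<lambda>w. fst (u w)) differentiable (at z)" "\<And>z. (\<lambda>w. snd (u w)) differentiable (at z)"
      "continuous_on UNIV (dx1 (\<lambda>w. fst (u w)))" "continuous_on UNIV (dx2 (\<lambda>w. snd (u w)))"
  shows "continuous_on UNIV (divflux g u)"
  unfolding divflux_def
  using continuous_on_pdiff_mult[OF g(1) u(1) g(2) u(3)] continuous_on_pdiff_mult[OF g(1) u(2) g(3) u(4)]
  by (intro continuous_on_add) simp_all

lemma integral_Omega_divflux_periodic:
  fixes g :: "pt3 \<Rightarrow> real" and u :: "pt3 \<Rightarrow> real \<times> real"
  assumes g: "\<And>z. g differentiable (at z)" "continuous_on UNIV (dx1 g)" "continuous_on UNIV (dx2 g)"
      "periodic_x g"
    and u: "\<And>z. (\<lambda>w. fst (u w)) differentiable (at z)" "\<And>z. (\<lambda>w. snd (u w)) differentiable (at z)"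
      "continuous_on UNIV (dx1 (\<lambda>w. fst (u w)))" "continuous_on UNIV (dx2 (\<lambda>w. snd (u w)))"
      "periodic_x u"
  shows "integral Omega (\<lambda>x. divflux g u (x, t)) = 0"
proof -
  let ?g1 = "\<lambda>w. g w * fst (u w)" and ?g2 = "\<lambda>w. g w * snd (u w)"
  have diff: "\<And>z. ?g1 differentiable (at z)" "\<And>z. ?g2 differentiable (at z)"
    using g(1) u(1,2) by (auto intro: differentiable_mult)
  have cont: "continuous_on UNIV (dx1 ?g1)" "continuous_on UNIV (dx2 ?g2)"
    using continuous_on_pdiff_mult[OF g(1) u(1) g(2) u(3)] continuous_on_pdiff_mult[OF g(1) u(2) g(3) u(4)]
    by simp_all
  have per: "periodic_x ?g1" "periodic_x ?g2" using g(4) u(5) by (simp_all add: periodic_x_def)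
  have "integral Omega (\<lambda>x. divflux g u (x, t))
      = integral Omega (\<lambda>x. dx1 ?g1 (x, t)) + integral Omega (\<lambda>x. dx2 ?g2 (x, t))"
    unfolding divflux_def
    by (intro integral_add integrable_on_Omega_time_slice cont)
  also have "\<dots> = 0"
    using integral_Omega_dx1_periodic[OF diff(1) cont(1) per(1)]
      integral_Omega_dx2_periodic[OF diff(2) cont(2) per(2)] by simp
  finally show ?thesis .
qed

lemma has_real_derivative_integral_Omega:
  fixes g :: "pt3 \<Rightarrow> real"
  assumes "\<And>z. g differentiable (at z)" "continuous_on UNIV (dt g)"
  shows "((\<lambda>s. integral Omega (\<lambda>x. g (x, s))) has_real_derivative integral Omega (\<lambda>x. dt g (x, s))) (at s)"
proof -
  have "continuous_on UNIV g"
    using assms(1) by (meson continuous_at_imp_continuous_on differentiable_imp_continuous_within)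
  have "((\<lambda>s. integral (cbox (0, 0) (1, 1)) (\<lambda>x. g (x, s))) has_field_derivative
      integral (cbox (0, 0) (1, 1)) (\<lambda>x. dt g (x, s))) (at s within UNIV)"
  proof (rule leibniz_rule_field_derivative[where f = "\<lambda>s x. g (x, s)" and fx = "\<lambda>s x. dt g (x, s)"])
    show "((\<lambda>s. g (x, s)) has_field_derivative dt g (x, s)) (at s within UNIV)" for x s
      using has_real_derivative_dt[OF assms(1)] by simp
    show "(\<lambda>x. g (x, s)) integrable_on cbox (0, 0) (1, 1)" for s
      using integrable_on_Omega_time_slice[OF \<open>continuous_on UNIV g\<close>] by (simp add: Omega_def)
    show "continuous_on (UNIV \<times> cbox (0, 0) (1, 1)) (\<lambda>(s, x). dt g (x, s))"
      unfolding case_prod_unfold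
      by (rule continuous_on_compose2[OF assms(2)]) (auto intro!: continuous_intros)
  qed auto
  then show ?thesis by (simp add: Omega_def)
qed

lemma sqrt_add_square_gt:
  fixes s \<omega> :: real
  assumes "0 < \<omega>"
  shows "s < sqrt (s\<^sup>2 + \<omega>\<^sup>2)"
proof -
  have "\<bar>s\<bar> < sqrt (s\<^sup>2 + \<omega>\<^sup>2)"
    using assms by (metis real_sqrt_abs real_sqrt_less_mono less_add_same_cancel1 zero_less_power2 less_irrefl)
  then show ?thesis by linarith
qed

lemma S_A_pos_if_neg:
  assumes "a < 0" "0 < \<omega>" "0 < \<nu>" "0 < h0"
  shows "0 < S_A f \<omega> \<nu> h0 hh a"
proof -
  let ?S = "S_h f \<omega> \<nu> hh a"
  have "0 < (sqrt (?S\<^sup>2 + \<omega>\<^sup>2) - ?S) / 2" using sqrt_add_square_gt[OF assms(2)] by simp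
  moreover have "0 < 2 * pos hh + \<nu>" using assms(3) by (simp add: pos_def)
  then have "a / (2 * pos hh + \<nu>) < 0" using assms(1) by (simp add: divide_neg_pos)
  moreover have "0 \<le> pos (f 0) / (h0 + \<nu>) * (1 - a)" using assms by (simp add: pos_def)
  ultimately show ?thesis unfolding S_A_def by (smt (verit) mult_neg_pos)
qed

lemma S_A_neg_if_gt_1:
  assumes "1 < a" "0 < \<omega>" "0 < \<nu>" "0 < h0"
  shows "S_A f \<omega> \<nu> h0 hh a < 0"
proof -
  let ?S = "S_h f \<omega> \<nu> hh a"
  have "0 < (sqrt (?S\<^sup>2 + \<omega>\<^sup>2) - ?S) / 2" using sqrt_add_square_gt[OF assms(2)] by simp
  moreover have "0 < 2 * pos hh + \<nu>" using assms(3) by (simp add: pos_def)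
  then have "0 < a / (2 * pos hh + \<nu>)" using assms(1) by simp
  moreover have "pos (f 0) / (h0 + \<nu>) * (1 - a) \<le> 0"
    using assms by (intro mult_nonneg_nonpos) (auto simp: pos_def)
  ultimately show ?thesis unfolding S_A_def by (smt (verit) mult_pos_pos)
qed

lemma S_h_eq_0_if_nonpos: "hh \<le> 0 \<Longrightarrow> S_h f \<omega> \<nu> hh a = 0"
  by (simp add: S_h_def chi_h_def pos_def)

lemma abs_S_h_le:
  assumes "0 \<le> a" "a \<le> 1" "0 < \<nu>" "\<And>y. f_lo \<le> f y \<and> f y \<le> f_hi"
  shows "\<bar>S_h f \<omega> \<nu> hh a\<bar> \<le> \<bar>f_hi\<bar> + \<bar>f_lo\<bar>"
proof -
  let ?K = "\<bar>f_hi\<bar> + \<bar>f_lo\<bar>" and ?y = "pos hh / (pos a + \<omega>)"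
  have f: "\<bar>f y\<bar> \<le> ?K" for y using assms(4)[of y] by linarith
  have "\<bar>f ?y * a + (1 - a) * f 0\<bar> \<le> \<bar>f ?y\<bar> * a + (1 - a) * \<bar>f 0\<bar>"
    using assms(1,2) abs_triangle_ineq[of "f ?y * a" "(1 - a) * f 0"] by (simp add: abs_mult)
  also have "\<dots> \<le> ?K * a + (1 - a) * ?K"
    using assms(1,2) f by (intro add_mono mult_right_mono mult_left_mono) auto
  finally have conv: "\<bar>f ?y * a + (1 - a) * f 0\<bar> \<le> ?K" by (simp add: algebra_simps)
  have "0 \<le> chi_h \<nu> hh" "chi_h \<nu> hh \<le> 1" using assms(3) by (auto simp: chi_h_def pos_def)
  then have "\<bar>S_h f \<omega> \<nu> hh a\<bar> \<le> ?K * 1"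
    unfolding S_h_def abs_mult using conv by (intro mult_mono) auto
  then show ?thesis by simp
qed

lemma chi_A_bounds: "0 < \<omega> \<Longrightarrow> 0 \<le> 1 - chi_A \<omega> a \<and> 1 - chi_A \<omega> a \<le> 1"
  by (auto simp: chi_A_def pos_def)

lemma chi_A_eq_1: "1 \<le> a \<Longrightarrow> chi_A \<omega> a = 1"
  by (simp add: chi_A_def pos_def)

lemma mult_ge_of_abs_le:
  fixes a d D c :: real
  assumes "a \<le> 0" "\<bar>d\<bar> \<le> D" "0 \<le> c" "c \<le> 1"
  shows "a * D \<le> - a * d * c"
proof -
  have "\<bar>d\<bar> * c \<le> D" using assms(2-4) mult_right_le_one_le[of "\<bar>d\<bar>" c] by simp
  then have "\<bar>a\<bar> * (\<bar>d\<bar> * c) \<le> \<bar>a\<bar> * D" by (simp add: mult_left_mono)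
  then have "\<bar>a * d * c\<bar> \<le> \<bar>a\<bar> * D" using assms(3) by (simp add: abs_mult mult.assoc)
  then show ?thesis using assms(1) by (simp add: abs_le_iff abs_of_nonpos)
qed

locale hA_system =
  fixes \<omega> \<nu> T h0 :: real and f :: "real \<Rightarrow> real" and u :: "pt3 \<Rightarrow> real \<times> real"
    and h A :: "pt3 \<Rightarrow> real"
  assumes \<omega>_pos: "0 < \<omega>" and \<nu>_pos: "0 < \<nu>" and h0_pos: "0 < h0"
    and u_diff: "\<And>z. (\<lambda>w. fst (u w)) differentiable (at z)" "\<And>z. (\<lambda>w. snd (u w)) differentiable (at z)"
    and u_pdiff_cont: "continuous_on UNIV (dx1 (\<lambda>w. fst (u w)))" "continuous_on UNIV (dx2 (\<lambda>w. snd (u w)))"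
    and u_per: "periodic_x u"
    and h_diff: "\<And>z. h differentiable (at z)" and h_pdiff_cont: "\<And>i. i < 3 \<Longrightarrow> continuous_on UNIV (pdiff i h)"
    and A_diff: "\<And>z. A differentiable (at z)"
    and h_per: "periodic_x h" and A_per: "periodic_x A"
    and h_eq: "\<And>z. snd z \<in> {0..T} \<Longrightarrow> dt h z + divflux h u z = S_h f \<omega> \<nu> (h z) (A z)"
    and A_eq: "\<And>z. snd z \<in> {0..T} \<Longrightarrow>
      dt A z + divflux A u z = S_A f \<omega> \<nu> h0 (h z) (A z) + A z * divu u z * chi_A \<omega> (A z)"
begin

lemma divu_cont: "continuous_on UNIV (divu u)"
  unfolding divu_def using u_pdiff_cont by (intro continuous_intros)

lemma Linf_divu_cont: "continuous_on {0..b} (Linf_divu u)"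
  by (rule continuous_on_Linf_divu[OF divu_cont])

lemma dt_h_at_critical:
  assumes "snd z \<in> {0..T}" "dx1 h z = 0" "dx2 h z = 0"
  shows "dt h z = S_h f \<omega> \<nu> (h z) (A z) - h z * divu u z"
  using h_eq[OF assms(1)] divflux_eq[OF h_diff u_diff] assms(2,3) by (simp add: algebra_simps)

lemma dt_A_at_critical:
  assumes "snd z \<in> {0..T}" "dx1 A z = 0" "dx2 A z = 0"
  shows "dt A z = S_A f \<omega> \<nu> h0 (h z) (A z) - A z * divu u z * (1 - chi_A \<omega> (A z))"
  using A_eq[OF assms(1)] divflux_eq[OF A_diff u_diff] assms(2,3) by (simp add: algebra_simps)

lemma h_nonneg:
  assumes "\<And>x. 0 \<le> h (x, 0)" "t \<in> {0..T}"
  shows "0 \<le> h (x, t)"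
proof (rule nonneg_by_exponential_barrier[OF h_diff h_per Linf_divu_cont assms(1) _ assms(2)])
  fix y s assume y: "y \<in> Omega" "s \<in> {0<..T}" "h (y, s) < 0" "dx1 h (y, s) = 0" "dx2 h (y, s) = 0"
  have "h (y, s) * Linf_divu u s \<le> - h (y, s) * divu u (y, s) * 1"
    using y(3) abs_divu_le_Linf_divu[OF divu_cont y(1)] by (intro mult_ge_of_abs_le) auto
  also have "\<dots> = dt h (y, s)"
    using dt_h_at_critical[of "(y, s)"] y S_h_eq_0_if_nonpos[of "h (y, s)"] by simp
  finally show "h (y, s) * Linf_divu u s \<le> dt h (y, s)" .
qed

lemma A_nonneg:
  assumes "\<And>x. 0 \<le> A (x, 0)" "t \<in> {0..T}"
  shows "0 \<le> A (x, t)"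
proof (rule nonneg_by_exponential_barrier[OF A_diff A_per Linf_divu_cont assms(1) _ assms(2)])
  fix y s assume y: "y \<in> Omega" "s \<in> {0<..T}" "A (y, s) < 0" "dx1 A (y, s) = 0" "dx2 A (y, s) = 0"
  have "A (y, s) * Linf_divu u s \<le> - A (y, s) * divu u (y, s) * (1 - chi_A \<omega> (A (y, s)))"
    using y(3) abs_divu_le_Linf_divu[OF divu_cont y(1)] chi_A_bounds[OF \<omega>_pos]
    by (intro mult_ge_of_abs_le) auto
  also have "\<dots> < dt A (y, s)"
    using dt_A_at_critical[of "(y, s)"] y S_A_pos_if_neg[OF y(3) \<omega>_pos \<nu>_pos h0_pos] by simp
  finally show "A (y, s) * Linf_divu u s \<le> dt A (y, s)" by simp
qed

lemma A_le_1:
  assumes "\<And>x. A (x, 0) \<le> 1" "t \<in> {0..T}"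
  shows "A (x, t) \<le> 1"
proof (rule le_of_forall_pos_less_add_mult[where c = 1])
  fix \<epsilon> :: real assume "0 < \<epsilon>"
  show "A (x, t) < 1 + \<epsilon> * 1"
  proof (rule periodic_upper_barrier[OF A_diff A_per, where \<psi>' = "\<lambda>s. 0"])
    fix y s assume y: "y \<in> Omega" "s \<in> {0<..T}" "A (y, s) = 1 + \<epsilon> * 1" "dx1 A (y, s) = 0" "dx2 A (y, s) = 0"
    have "1 < A (y, s)" using y(3) \<open>0 < \<epsilon>\<close> by simp
    then show "dt A (y, s) < 0"
      using dt_A_at_critical[of "(y, s)"] y chi_A_eq_1 S_A_neg_if_gt_1[OF _ \<omega>_pos \<nu>_pos h0_pos] by simp
  next
    show "A (y, 0) < 1 + \<epsilon> * 1" for y using assms(1)[of y] \<open>0 < \<epsilon>\<close> by simp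
  qed (use assms(2) in auto)
qed

end

locale hA_system_bounded_source = hA_system +
  fixes K :: real
  assumes source_bound: "\<And>x s. s \<in> {0..T} \<Longrightarrow> \<bar>S_h f \<omega> \<nu> (h (x, s)) (A (x, s))\<bar> \<le> K"
begin

lemma dt_h_bounds_at_critical:
  assumes "x \<in> Omega" "s \<in> {0..T}" "0 \<le> h (x, s)" "dx1 h (x, s) = 0" "dx2 h (x, s) = 0"
  shows "- K - h (x, s) * Linf_divu u s \<le> dt h (x, s)" "dt h (x, s) \<le> K + h (x, s) * Linf_divu u s"
proof -
  have "\<bar>h (x, s) * divu u (x, s)\<bar> \<le> h (x, s) * Linf_divu u s"
    using assms(3) abs_divu_le_Linf_divu[OF divu_cont assms(1), of s] by (simp add: abs_mult mult_left_mono)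
  then show "- K - h (x, s) * Linf_divu u s \<le> dt h (x, s)" "dt h (x, s) \<le> K + h (x, s) * Linf_divu u s"
    using dt_h_at_critical[of "(x, s)"] source_bound[of s x] assms(2,4,5) by (auto simp: abs_le_iff)
qed

lemma h_lower_bound:
  assumes init: "0 < h_lo" "\<And>x. h_lo \<le> h (x, 0)" and t: "t \<in> {0..T}"
  shows "h_lo * exp (- integral {0..t} (Linf_divu u)) - K * t \<le> h (x, t)"
proof (rule le_of_forall_pos_less_add_mult[where c = "1 + t"])
  fix \<epsilon> :: real assume "0 < \<epsilon>"
  define E where "E s = integral {0..s} (Linf_divu u)" for s
  define \<phi> where "\<phi> s = h_lo * exp (- E s) - K * s - \<epsilon> * (1 + s)" for s
  have "0 \<le> K" using source_bound[OF t] by (meson abs_ge_zero order_trans)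
  have "\<phi> t < h (x, t)"
  proof (rule periodic_lower_barrier[OF h_diff h_per,
        where \<phi>' = "\<lambda>s. - h_lo * exp (- E s) * Linf_divu u s - K - \<epsilon>"])
    show "continuous_on {0..T} \<phi>"
      unfolding \<phi>_def E_def
      by (intro continuous_intros indefinite_integral_continuous_1 integrable_continuous_real Linf_divu_cont)
    show "(\<phi> has_real_derivative - h_lo * exp (- E s) * Linf_divu u s - K - \<epsilon>) (at s)"
      if "s \<in> {0<..T}" for s
      unfolding \<phi>_def E_def using has_real_derivative_integral_from_0[OF Linf_divu_cont, of s] that
      by (auto intro!: derivative_eq_intros simp: algebra_simps)
    show "\<phi> 0 < h (y, 0)" for y using init(2)[of y] \<open>0 < \<epsilon>\<close> by (simp add: \<phi>_def E_def)
    show "- h_lo * exp (- E s) * Linf_divu u s - K - \<epsilon> < dt h (y, s)"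
      if y: "y \<in> Omega" "s \<in> {0<..T}" "h (y, s) = \<phi> s" "dx1 h (y, s) = 0" "dx2 h (y, s) = 0" for y s
    proof -
      have "0 \<le> h (y, s)" using h_nonneg[where x = y and t = s] init y(2) by (simp add: order.trans[OF less_imp_le])
      then have "- K - \<phi> s * Linf_divu u s \<le> dt h (y, s)"
        using dt_h_bounds_at_critical(1)[OF y(1) _ _ y(4,5)] y(2,3) by simp
      moreover have "0 \<le> Linf_divu u s * (K * s + \<epsilon> * (1 + s))"
        using Linf_divu_nonneg[OF divu_cont] \<open>0 \<le> K\<close> \<open>0 < \<epsilon>\<close> y(2) by simp
      ultimately show ?thesis using \<open>0 < \<epsilon>\<close> by (simp add: \<phi>_def algebra_simps)
    qed
  qed (rule t)
  then show "h_lo * exp (- integral {0..t} (Linf_divu u)) - K * t < h (x, t) + \<epsilon> * (1 + t)"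
    by (simp add: \<phi>_def E_def algebra_simps)
qed

lemma h_upper_bound:
  assumes init: "\<And>x. 0 \<le> h (x, 0)" "\<And>x. h (x, 0) \<le> h_hi" and t: "t \<in> {0..T}"
  shows "h (x, t) \<le> exp (integral {0..t} (Linf_divu u)) * (h_hi + K * t)"
proof (rule le_of_forall_pos_less_add_mult[where c = "exp (integral {0..t} (Linf_divu u)) * (1 + t)"])
  fix \<epsilon> :: real assume "0 < \<epsilon>"
  define E where "E s = integral {0..s} (Linf_divu u)" for s
  define \<psi> where "\<psi> s = exp (E s) * (h_hi + K * s + \<epsilon> * (1 + s))" for s
  have "0 \<le> K" using source_bound[OF t] by (meson abs_ge_zero order_trans)
  have "h (x, t) < \<psi> t"
  proof (rule periodic_upper_barrier[OF h_diff h_per,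
        where \<psi>' = "\<lambda>s. Linf_divu u s * \<psi> s + exp (E s) * (K + \<epsilon>)"])
    show "continuous_on {0..T} \<psi>"
      unfolding \<psi>_def E_def
      by (intro continuous_intros indefinite_integral_continuous_1 integrable_continuous_real Linf_divu_cont)
    show "(\<psi> has_real_derivative Linf_divu u s * \<psi> s + exp (E s) * (K + \<epsilon>)) (at s)"
      if "s \<in> {0<..T}" for s
      unfolding \<psi>_def E_def using has_real_derivative_integral_from_0[OF Linf_divu_cont, of s] that
      by (auto intro!: derivative_eq_intros simp: algebra_simps)
    show "h (y, 0) < \<psi> 0" for y using init(2)[of y] \<open>0 < \<epsilon>\<close> by (simp add: \<psi>_def E_def)
    show "dt h (y, s) < Linf_divu u s * \<psi> s + exp (E s) * (K + \<epsilon>)"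
      if y: "y \<in> Omega" "s \<in> {0<..T}" "h (y, s) = \<psi> s" "dx1 h (y, s) = 0" "dx2 h (y, s) = 0" for y s
    proof -
      have "0 \<le> h (y, s)" using h_nonneg[OF init(1)] y(2) by simp
      then have "dt h (y, s) \<le> K + \<psi> s * Linf_divu u s"
        using dt_h_bounds_at_critical(2)[OF y(1) _ _ y(4,5)] y(2,3) by simp
      moreover have "1 \<le> exp (E s)"
        using integral_nonneg[OF integrable_continuous_real[OF Linf_divu_cont] Linf_divu_nonneg[OF divu_cont]]
        by (simp add: E_def)
      then have "K + \<epsilon> \<le> exp (E s) * (K + \<epsilon>)" using \<open>0 \<le> K\<close> \<open>0 < \<epsilon>\<close> by simp
      ultimately show ?thesis using \<open>0 < \<epsilon>\<close> by (simp add: algebra_simps)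
    qed
  qed (rule t)
  then show "h (x, t) < exp (integral {0..t} (Linf_divu u)) * (h_hi + K * t)
      + \<epsilon> * (exp (integral {0..t} (Linf_divu u)) * (1 + t))"
    by (simp add: \<psi>_def E_def algebra_simps)
qed

lemma abs_integral_dt_h_le:
  assumes "s \<in> {0..T}"
  shows "\<bar>integral Omega (\<lambda>x. dt h (x, s))\<bar> \<le> K"
proof -
  have "integral Omega (\<lambda>x. divflux h u (x, s)) = 0"
    by (rule integral_Omega_divflux_periodic[OF h_diff h_pdiff_cont h_pdiff_cont h_per u_diff u_pdiff_cont u_per])
      simp_all
  moreover have "((\<lambda>x. dt h (x, s) + divflux h u (x, s)) has_integral
      integral Omega (\<lambda>x. dt h (x, s)) + integral Omega (\<lambda>x. divflux h u (x, s))) Omega"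
    using continuous_on_divflux[OF h_diff h_pdiff_cont h_pdiff_cont u_diff u_pdiff_cont]
    by (intro has_integral_add integrable_integral integrable_on_Omega_time_slice h_pdiff_cont) simp_all
  ultimately have "((\<lambda>x. dt h (x, s) + divflux h u (x, s)) has_integral integral Omega (\<lambda>x. dt h (x, s))) (cbox (0, 0) (1, 1))"
    by (simp add: Omega_def)
  moreover have "norm (dt h (x, s) + divflux h u (x, s)) \<le> K" for x
    using h_eq[of "(x, s)"] source_bound[of s x] assms by simp
  ultimately have "norm (integral Omega (\<lambda>x. dt h (x, s))) \<le> K * Henstock_Kurzweil_Integration.content Omega"
    unfolding Omega_def using source_bound[OF assms] by (intro has_integral_bound) (auto intro: order_trans[OF abs_ge_zero])
  then show ?thesis by (simp add: content_Omega)
qed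

lemma abs_integral_h_change_le:
  assumes "t \<in> {0..T}"
  shows "\<bar>integral Omega (\<lambda>x. h (x, t)) - integral Omega (\<lambda>x. h (x, 0))\<bar> \<le> K * t"
proof (cases "t = 0")
  case False
  then have "0 < t" using assms by simp
  then obtain s where s: "0 < s" "s < t"
    "integral Omega (\<lambda>x. h (x, t)) - integral Omega (\<lambda>x. h (x, 0)) = (t - 0) * integral Omega (\<lambda>x. dt h (x, s))"
    using MVT2[OF \<open>0 < t\<close> has_real_derivative_integral_Omega[OF h_diff h_pdiff_cont]] by auto
  moreover have "\<bar>integral Omega (\<lambda>x. dt h (x, s))\<bar> \<le> K"
    using abs_integral_dt_h_le[of s] s assms by simp
  ultimately show ?thesis using \<open>0 < t\<close> by (simp add: abs_mult mult.commute mult_right_mono)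
qed simp

lemma h_pointwise_bounds:
  assumes "0 < h_lo" "\<And>x. h_lo \<le> h (x, 0) \<and> h (x, 0) \<le> h_hi" "t \<in> {0..T}"
    and "6 * K * t \<le> h_lo" "exp (integral {0..t} (Linf_divu u)) \<le> 2"
  shows "h_lo / 4 \<le> h (x, t) \<and> h (x, t) \<le> 4 * h_hi"
proof
  have init: "h_lo \<le> h (x, 0)" "h (x, 0) \<le> h_hi" "0 \<le> h (x, 0)" for x
    using assms(1) assms(2)[of x] by auto
  have "0 \<le> K" using source_bound[OF assms(3)] by (meson abs_ge_zero order_trans)
  have Kt: "K * t \<le> h_lo / 6" using assms(4) by (simp add: field_simps)
  have "h_lo / 2 \<le> h_lo * exp (- integral {0..t} (Linf_divu u))"
    using assms(1,5) by (simp add: exp_minus field_simps)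
  then show "h_lo / 4 \<le> h (x, t)"
    using h_lower_bound[OF assms(1) init(1) assms(3), where x = x] Kt assms(1) by linarith
  have "0 \<le> K * t" using \<open>0 \<le> K\<close> assms(3) by simp
  moreover have "h_hi + K * t \<le> 2 * h_hi" using Kt init(1,2)[of x] assms(1) by linarith
  ultimately have "exp (integral {0..t} (Linf_divu u)) * (h_hi + K * t) \<le> 2 * (2 * h_hi)"
    using assms(5) by (intro mult_mono) auto
  then show "h (x, t) \<le> 4 * h_hi"
    using h_upper_bound[OF init(3) init(2) assms(3), where x = x] by linarith
qed

lemma integral_h_bounds:
  assumes "t \<in> {0..T}" "6 * K * t \<le> integral Omega (\<lambda>x. h (x, 0))"
  shows "integral Omega (\<lambda>x. h (x, 0)) / 2 \<le> integral Omega (\<lambda>x. h (x, t))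
    \<and> integral Omega (\<lambda>x. h (x, t)) \<le> 2 * integral Omega (\<lambda>x. h (x, 0))"
  using abs_integral_h_change_le[OF assms(1)] assms(2) unfolding abs_le_iff by linarith

end

lemma smooth3_differentiable: "smooth3 g \<Longrightarrow> g differentiable (at z)"
  using fold_simps(1)[of pdiff g] unfolding smooth3_def by metis

lemma smooth3_continuous_pdiff:
  assumes "smooth3 g"
  shows "continuous_on UNIV (pdiff i g)"
proof -
  have "pdiff i g differentiable (at z)" for z
    using assms unfolding smooth3_def by (metis fold_simps(1) fold_simps(2))
  then show ?thesis by (meson continuous_at_imp_continuous_on differentiable_imp_continuous_within)
qed

theorem mainTheorem3:
  fixes \<omega> \<nu> T h0 h_lo h_hi f_lo f_hi :: real
    and f :: "real \<Rightarrow> real"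
    and u :: "pt3 \<Rightarrow> real \<times> real"
    and h A :: "pt3 \<Rightarrow> real"
    and h_in A_in :: "real \<times> real \<Rightarrow> real"
  assumes \<omega>: "0 < \<omega>" "\<omega> < 1" and \<nu>: "0 < \<nu>" "\<nu> < 1" and T: "0 < T"
    and h0: "0 < h0"
    and f_smooth: "smooth_real f" and f_bd: "\<And>y. f_lo \<le> f y \<and> f y \<le> f_hi"
    and u_smooth: "smooth3 (\<lambda>z. fst (u z))" "smooth3 (\<lambda>z. snd (u z))"
    and u_per: "periodic_x u"
    and h_reg: "C1_3 h" and A_reg: "C1_3 A"
    and h_per: "periodic_x h" and A_per: "periodic_x A"
    and h_eq: "\<And>z. snd z \<in> {0..T} \<Longrightarrow>
        dt h z + divflux h u z = S_h f \<omega> \<nu> (h z) (A z)"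
    and A_eq: "\<And>z. snd z \<in> {0..T} \<Longrightarrow>
        dt A z + divflux A u z
          = S_A f \<omega> \<nu> h0 (h z) (A z) + A z * divu u z * chi_A \<omega> (A z)"
    and h_init: "\<And>x. h (x, 0) = h_in x" and A_init: "\<And>x. A (x, 0) = A_in x"
    and h_in_bd: "0 < h_lo" "\<And>x. h_lo \<le> h_in x \<and> h_in x \<le> h_hi"
    and A_in_bd: "\<And>x. 0 \<le> A_in x \<and> A_in x \<le> 1"
  defines "K \<equiv> \<bar>f_hi\<bar> + \<bar>f_lo\<bar>"
  shows "(\<forall>x t. t \<in> {0..T} \<longrightarrow> 0 \<le> h (x, t))
    \<and> (\<forall>t \<in> {0..T}. 6 * K * t \<le> h_lo \<and> exp (integral {0..t} (Linf_divu u)) \<le> 2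
          \<longrightarrow> (\<forall>x. h_lo / 4 \<le> h (x, t) \<and> h (x, t) \<le> 4 * h_hi))
    \<and> (\<forall>t \<in> {0..T}. 6 * K * measure lborel Omega * t \<le> integral Omega h_in
          \<longrightarrow> integral Omega h_in / 2 \<le> integral Omega (\<lambda>x. h (x, t))
            \<and> integral Omega (\<lambda>x. h (x, t)) \<le> 2 * integral Omega h_in)"
proof -
  interpret hA_system \<omega> \<nu> T h0 f u h A
    using \<omega>(1) \<nu>(1) h0 u_per h_per A_per h_eq A_eq h_reg A_reg
      smooth3_differentiable[OF u_smooth(1)] smooth3_differentiable[OF u_smooth(2)]
      smooth3_continuous_pdiff[OF u_smooth(1)] smooth3_continuous_pdiff[OF u_smooth(2)]
    by unfold_locales (auto simp: C1_3_def)
  have A_01: "0 \<le> A (x, s) \<and> A (x, s) \<le> 1" if "s \<in> {0..T}" for x s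
    using A_nonneg A_le_1 A_init A_in_bd that by simp
  have source: "\<bar>S_h f \<omega> \<nu> (h (x, s)) (A (x, s))\<bar> \<le> K" if "s \<in> {0..T}" for x s
    unfolding K_def using A_01[OF that] \<nu>(1) f_bd by (intro abs_S_h_le) auto
  interpret hA_system_bounded_source \<omega> \<nu> T h0 f u h A K
    by unfold_locales (rule source)
  have h0_bd: "\<And>x. h_lo \<le> h (x, 0) \<and> h (x, 0) \<le> h_hi" "\<And>x. 0 \<le> h (x, 0)"
    using h_init h_in_bd by (auto intro: order.trans[OF less_imp_le])
  show ?thesis
    using h_nonneg[OF h0_bd(2)] h_pointwise_bounds[OF h_in_bd(1) h0_bd(1)] integral_h_bounds
    by (simp add: h_init measure_Omega)
qed

end
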